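(* Let $(\mathcal S,\gamma)$ be an IFS arc with similarity dimension $s$. Then $\gamma$ is a quasiarc if and only if the Hutchinson parameterization $\phi:[0,1]\to\gamma$ is $\frac1s$-bi-Hölder continuous, i.e. there is $K\ge1$ with $K^{-1}|u-v|^{1/s}\le |\phi(u)-\phi(v)|\le K|u-v|^{1/s}$ for all $u,v\in[0,1]$.
   Context: Let $\mathcal S=\{S_1,\dots,S_N\}$, $N\ge2$, be contracting similarities of $\mathbb{R}^n$ with ratios $r_i\in(0,1)$, and $\gamma$ its invariant set (unique nonempty compact set with $\gamma=\bigcup_i S_i(\gamma)$). $(\mathcal S,\gamma)$ is an IFS path if there are $a,b\in\mathbb{R}^n$ with $S_1(a)=a$, $S_N(b)=b$, $S_i(b)=S_{i+1}(a)$ for $i=1,\dots,N-1$. It is an IFS arc if moreover $S_i(\gamma)\cap S_{i+1}(\gamma)=\{S_{i+1}(a)\}$ for $i=1,\dots,N-1$ and $S_i(\gamma)\cap S_j(\gamma)=\emptyset$ for $i,j\in\{1,\dots,N\}$, $|i-j|>1$. The similarity dimension is the unique $s>0$ with $\sum_i r_i^s=1$. Hutchinson parameterization: set $t_0=0$ and $t_i=t_{i-1}+r_i^s$ (so $t_N=1$), $s_i(t)=t\,t_i+(1-t)t_{i-1}$; for a finite word $\sigma=(\sigma_1,\dots,\sigma_k)$ write $S_\sigma=S_{\sigma_1}\circ\cdots\circ S_{\sigma_k}$, $s_\sigma$ likewise. Let $\phi_0(t)=a+t(b-a)$ and $\phi_k(t)=S_\sigma\circ\phi_0\circ s_\sigma^{-1}(t)$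 for $t\in s_\sigma([0,1])$, $\sigma\in\{1,\dots,N\}^k$. The maps $\phi_k$ converge uniformly to a continuous surjection $\phi:[0,1]\to\gamma$, the Hutchinson parameterization. A quasiarc is a metric space quasisymmetrically equivalent to $[0,1]$ ($\gamma$ with the Euclidean metric). *)

theory Defs
  imports "HOL-Analysis.Analysis"
begin

definition similarity_with_ratio :: "('a::euclidean_space \<Rightarrow> 'a) \<Rightarrow> real \<Rightarrow> bool" where
  "similarity_with_ratio f c \<longleftrightarrow> (\<forall>x y. dist (f x) (f y) = c * dist x y)"

definition contracting_ifs :: "nat \<Rightarrow> (nat \<Rightarrow> 'a::euclidean_space \<Rightarrow> 'a) \<Rightarrow> (nat \<Rightarrow> real) \<Rightarrow> bool" where
  "contracting_ifs N S r \<longleftrightarrow> N \<ge> 2 \<and>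
     (\<forall>i\<in>{1..N}. 0 < r i \<and> r i < 1 \<and> similarity_with_ratio (S i) (r i))"

definition invariant_set :: "nat \<Rightarrow> (nat \<Rightarrow> 'a::euclidean_space \<Rightarrow> 'a) \<Rightarrow> 'a set \<Rightarrow> bool" where
  "invariant_set N S \<gamma> \<longleftrightarrow> compact \<gamma> \<and> \<gamma> \<noteq> {} \<and> \<gamma> = (\<Union>i\<in>{1..N}. S i ` \<gamma>)"

definition ifs_path :: "nat \<Rightarrow> (nat \<Rightarrow> 'a::euclidean_space \<Rightarrow> 'a) \<Rightarrow> 'a \<Rightarrow> 'a \<Rightarrow> bool" where
  "ifs_path N S a b \<longleftrightarrow> S 1 a = a \<and> S N b = b \<and> (\<forall>i\<in>{1..N-1}. S i b = S (Suc i) a)"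

definition ifs_arc :: "nat \<Rightarrow> (nat \<Rightarrow> 'a::euclidean_space \<Rightarrow> 'a) \<Rightarrow> 'a set \<Rightarrow> 'a \<Rightarrow> 'a \<Rightarrow> bool" where
  "ifs_arc N S \<gamma> a b \<longleftrightarrow> ifs_path N S a b \<and>
     (\<forall>i\<in>{1..N-1}. S i ` \<gamma> \<inter> S (Suc i) ` \<gamma> = {S (Suc i) a}) \<and>
     (\<forall>i\<in>{1..N}. \<forall>j\<in>{1..N}. \<bar>int i - int j\<bar> > 1 \<longrightarrow> S i ` \<gamma> \<inter> S j ` \<gamma> = {})"

definition similarity_dimension :: "nat \<Rightarrow> (nat \<Rightarrow> real) \<Rightarrow> real \<Rightarrow> bool" where
  "similarity_dimension N r s \<longleftrightarrow> s > 0 \<and> (\<Sum>i=1..N. r i powr s) = 1"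

definition hutch_t :: "(nat \<Rightarrow> real) \<Rightarrow> real \<Rightarrow> nat \<Rightarrow> real" where
  "hutch_t r s i = (\<Sum>j=1..i. r j powr s)"

definition hutch_s :: "(nat \<Rightarrow> real) \<Rightarrow> real \<Rightarrow> nat \<Rightarrow> real \<Rightarrow> real" where
  "hutch_s r s i t = t * hutch_t r s i + (1 - t) * hutch_t r s (i - 1)"

definition word_comp :: "(nat \<Rightarrow> 'b \<Rightarrow> 'b) \<Rightarrow> nat list \<Rightarrow> 'b \<Rightarrow> 'b" where
  "word_comp F \<sigma> = foldr (\<lambda>i g. F i \<circ> g) \<sigma> id"

definition words :: "nat \<Rightarrow> nat \<Rightarrow> nat list set" where
  "words N k = {\<sigma>. length \<sigma> = k \<and> set \<sigma> \<subseteq> {1..N}}"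

definition hutch_phi0 :: "'a::euclidean_space \<Rightarrow> 'a \<Rightarrow> real \<Rightarrow> 'a" where
  "hutch_phi0 a b t = a + t *\<^sub>R (b - a)"

definition hutch_phik ::
  "nat \<Rightarrow> (nat \<Rightarrow> 'a::euclidean_space \<Rightarrow> 'a) \<Rightarrow> (nat \<Rightarrow> real) \<Rightarrow> real \<Rightarrow> 'a \<Rightarrow> 'a \<Rightarrow> nat \<Rightarrow> real \<Rightarrow> 'a" where
  "hutch_phik N S r s a b k t =
     (let \<sigma> = (SOME \<sigma>. \<sigma> \<in> words N k \<and> t \<in> word_comp (hutch_s r s) \<sigma> ` {0..1}) in
        word_comp S \<sigma> (hutch_phi0 a b (inv_into {0..1} (word_comp (hutch_s r s) \<sigma>) t)))"

definition hutchinson_parameterization ::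
  "nat \<Rightarrow> (nat \<Rightarrow> 'a::euclidean_space \<Rightarrow> 'a) \<Rightarrow> (nat \<Rightarrow> real) \<Rightarrow> real \<Rightarrow> 'a \<Rightarrow> 'a \<Rightarrow> (real \<Rightarrow> 'a) \<Rightarrow> bool" where
  "hutchinson_parameterization N S r s a b \<phi> \<longleftrightarrow>
     uniform_limit {0..1} (hutch_phik N S r s a b) \<phi> sequentially"

definition quasisymmetric_on :: "'b::metric_space set \<Rightarrow> ('b \<Rightarrow> 'c::metric_space) \<Rightarrow> bool" where
  "quasisymmetric_on A f \<longleftrightarrow> continuous_on A f \<and> inj_on f A \<and>
     (\<exists>\<eta>::real \<Rightarrow> real. continuous_on {0..} \<eta> \<and> strict_mono_on {0..} \<eta> \<and> \<eta> 0 = 0 \<and>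
        \<eta> ` {0..} = {0..} \<and>
        (\<forall>x\<in>A. \<forall>y\<in>A. \<forall>z\<in>A. \<forall>t\<ge>0. dist x z \<le> t * dist y z \<longrightarrow>
            dist (f x) (f z) \<le> \<eta> t * dist (f y) (f z)))"

definition quasiarc :: "'a::metric_space set \<Rightarrow> bool" where
  "quasiarc \<gamma> \<longleftrightarrow> (\<exists>f::real \<Rightarrow> 'a. quasisymmetric_on {0..1} f \<and> f ` {0..1} = \<gamma>)"

end

theory Submission
  imports Defs
begin

text \<open>
  The parameterization satisfies \<open>\<phi>(s\<^sub>i(t)) = S\<^sub>i(\<phi>(t))\<close>, where \<open>s\<^sub>i\<close> scales parameter
  differences by \<open>r\<^sub>i\<^sup>s\<close> and \<open>S\<^sub>i\<close> scales distances by \<open>r\<^sub>i\<close>. So the Hoelder quotient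
  \<open>|\<phi>(u) - \<phi>(v)| / |u - v|\<^sup>1\<^sup>/\<^sup>s\<close> is invariant under the maps \<open>s\<^sub>i\<close>, and it suffices to bound
  it for pairs \<open>u < v\<close> that do not lie in a common piece \<open>[t\<^sub>i\<^sub>-\<^sub>1, t\<^sub>i]\<close>. If the pieces
  are not adjacent, \<open>v - u\<close> is bounded below, and \<open>|\<phi>(u) - \<phi>(v)|\<close> is bounded above by the
  diameter of \<open>\<gamma>\<close> and below by the disjointness in the arc condition. If they are adjacent,
  the junction \<open>t\<^sub>i\<close> splits the pair into two pairs with an endpoint of a piece, which the
  same reduction handles. This gives the upper bound for every IFS path. For the lower bound at
  a junction, \<open>\<phi>(t\<^sub>i)\<close> must not be much farther from \<open>\<phi>(u)\<close> than \<open>\<phi>(v)\<close> is; this is the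
  three-point (bounded turning) property of quasiarcs. Conversely, a bi-Hoelder map is
  quasisymmetric, and \<open>\<phi>\<close> maps \<open>[0, 1]\<close> onto \<open>\<gamma>\<close>.
\<close>

section \<open>Contractions, quasisymmetry and Hoelder maps\<close>

lemma subset_of_contractions_invariant:
  fixes f :: "nat \<Rightarrow> 'a::heine_borel \<Rightarrow> 'a"
  assumes "compact A" "A \<noteq> {}" "closed B" "B \<noteq> {}"
    and cover: "A \<subseteq> (\<Union>i\<in>I. f i ` A)"
    and invariant: "\<And>i. i \<in> I \<Longrightarrow> f i ` B \<subseteq> B"
    and contraction: "\<And>i x y. i \<in> I \<Longrightarrow> dist (f i x) (f i y) \<le> c i * dist x y"
    and ratio: "\<And>i. i \<in> I \<Longrightarrow> c i \<in> {0..<1}"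
  shows "A \<subseteq> B"
proof -
  have "continuous_on A (\<lambda>x. infdist x B)"
    by (intro continuous_intros)
  then obtain x0 where "x0 \<in> A" and max: "\<And>x. x \<in> A \<Longrightarrow> infdist x B \<le> infdist x0 B"
    using continuous_attains_sup[OF \<open>compact A\<close> \<open>A \<noteq> {}\<close>] by blast
  then obtain i y where i: "i \<in> I" and y: "y \<in> A" and x0: "x0 = f i y"
    using cover by blast
  obtain z where z: "z \<in> B" "infdist y B = dist y z"
    using infdist_attains_inf[OF \<open>closed B\<close> \<open>B \<noteq> {}\<close>] by blast
  have "infdist x0 B \<le> dist (f i y) (f i z)"
    using x0 invariant[OF i] z(1) by (auto intro: infdist_le)
  also have "\<dots> \<le> c i * infdist y B"
    using contraction[OF i] z(2) by simp
  also have "\<dots> \<le> c i * infdist x0 B"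
    using max[OF y] ratio[OF i] by (intro mult_left_mono) auto
  finally have "(1 - c i) * infdist x0 B \<le> 0"
    by (simp add: algebra_simps)
  then have "infdist x0 B \<le> 0"
    using ratio[OF i] by (simp add: mult_le_0_iff)
  then have "infdist x B = 0" if "x \<in> A" for x
    using max[OF that] infdist_nonneg[of x B] by linarith
  then show ?thesis
    using in_closed_iff_infdist_zero[OF \<open>closed B\<close> \<open>B \<noteq> {}\<close>] by blast
qed

lemma finite_compact_separation:
  fixes A B :: "'i \<Rightarrow> 'a::heine_borel set"
  assumes "finite P"
    and "\<And>p. p \<in> P \<Longrightarrow> compact (A p) \<and> compact (B p) \<and> A p \<inter> B p = {}"
  shows "\<exists>\<delta>>0. \<forall>p\<in>P. \<forall>x\<in>A p. \<forall>y\<in>B p. \<delta> \<le> dist x y"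
  using assms
proof (induction P rule: finite_induct)
  case empty
  show ?case
    using zero_less_one by blast
next
  case (insert p P)
  obtain \<delta> where \<delta>: "\<delta> > 0" "\<forall>q\<in>P. \<forall>x\<in>A q. \<forall>y\<in>B q. \<delta> \<le> dist x y"
    using insert by auto
  obtain \<epsilon> where \<epsilon>: "\<epsilon> > 0" "\<forall>x\<in>A p. \<forall>y\<in>B p. \<epsilon> \<le> dist x y"
    using separate_compact_closed[of "A p" "B p"] insert.prems compact_imp_closed by blast
  show ?case
    using \<delta> \<epsilon> by (intro exI[of _ "min \<delta> \<epsilon>"]) force
qed

lemma connected_inter_singleton_between:
  fixes I J :: "real set"
  assumes "connected I" "connected J" "I \<inter> J = {w}" "p \<in> I" "q \<in> J"
  shows "\<bar>w - p\<bar> \<le> \<bar>q - p\<bar>"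
proof (rule ccontr)
  assume far: "\<not> \<bar>w - p\<bar> \<le> \<bar>q - p\<bar>"
  have w: "w \<in> I" "w \<in> J"
    using assms(3) by auto
  have "q \<in> I \<or> p \<in> J"
    using far connected_contains_Icc[OF assms(1) assms(4) w(1)]
      connected_contains_Icc[OF assms(1) w(1) assms(4)]
      connected_contains_Icc[OF assms(2) assms(5) w(2)]
      connected_contains_Icc[OF assms(2) w(2) assms(5)]
    by (cases "p \<le> w"; cases "q \<le> p") (auto simp: subset_iff)
  then have "q = w \<or> p = w"
    using assms(3-5) by blast
  then show False
    using far by auto
qed

lemma quasisymmetric_on_three_point:
  assumes "quasisymmetric_on A f"
  obtains H where "H > 0"
    and "\<And>p q w. p \<in> A \<Longrightarrow> q \<in> A \<Longrightarrow> w \<in> A \<Longrightarrow> dist w p \<le> dist q p \<Longrightarrow>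
           dist (f w) (f p) \<le> H * dist (f q) (f p)"
proof -
  obtain \<eta> where mono: "strict_mono_on {0..} \<eta>" and "\<eta> 0 = 0"
    and qs: "\<forall>x\<in>A. \<forall>y\<in>A. \<forall>z\<in>A. \<forall>t\<ge>0. dist x z \<le> t * dist y z \<longrightarrow>
               dist (f x) (f z) \<le> \<eta> t * dist (f y) (f z)"
    using assms unfolding quasisymmetric_on_def by blast
  have "\<eta> 1 > 0"
    using strict_mono_onD[OF mono, of 0 1] \<open>\<eta> 0 = 0\<close> by simp
  then show ?thesis
    using qs by (intro that[of "\<eta> 1"]) auto
qed

text \<open>Connected sets \<open>P \<ni> p\<close> and \<open>Q \<ni> q\<close> meeting only in \<open>w\<close> put \<open>w\<close> on the subarc from \<open>p\<close>
  to \<open>q\<close>.\<close>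
lemma quasiarc_three_point:
  fixes \<gamma> :: "'a::metric_space set"
  assumes "quasiarc \<gamma>"
  obtains H where "H > 0"
    and "\<And>P Q w p q. P \<subseteq> \<gamma> \<Longrightarrow> Q \<subseteq> \<gamma> \<Longrightarrow> connected P \<Longrightarrow> connected Q \<Longrightarrow>
           P \<inter> Q = {w} \<Longrightarrow> p \<in> P \<Longrightarrow> q \<in> Q \<Longrightarrow> dist w p \<le> H * dist q p"
proof -
  obtain f :: "real \<Rightarrow> 'a" where qs: "quasisymmetric_on {0..1} f" and image: "f ` {0..1} = \<gamma>"
    using assms unfolding quasiarc_def by blast
  then have cont: "continuous_on {0..1} f" and inj: "inj_on f {0..1}"
    unfolding quasisymmetric_on_def by auto
  obtain H where "H > 0" and H: "\<And>p q w. p \<in> {0..1} \<Longrightarrow> q \<in> {0..1} \<Longrightarrow> w \<in> {0..1} \<Longrightarrow>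
      dist w p \<le> dist q p \<Longrightarrow> dist (f w) (f p) \<le> H * dist (f q) (f p)"
    using quasisymmetric_on_three_point[OF qs] by blast
  define g where "g = the_inv_into {0..1} f"
  have g_cont: "continuous_on \<gamma> g"
    unfolding g_def image[symmetric] using cont inj by (intro continuous_on_inv_into) auto
  have g_inj: "inj_on g \<gamma>" and g_range: "g ` \<gamma> \<subseteq> {0..1}"
    unfolding g_def image[symmetric] using inj
    by (auto intro: inj_on_the_inv_into the_inv_into_into)
  have fg: "f (g x) = x" if "x \<in> \<gamma>" for x
    unfolding g_def using that image f_the_inv_into_f[OF inj] by blast
  show ?thesis
  proof (rule that[OF \<open>H > 0\<close>])
    fix P Q w p q
    assume PQ: "P \<subseteq> \<gamma>" "Q \<subseteq> \<gamma>" "connected P" "connected Q" "P \<inter> Q = {w}" "p \<in> P" "q \<in> Q"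
    have "g ` P \<inter> g ` Q = {g w}"
      using PQ inj_on_image_Int[OF g_inj PQ(1,2)] by simp
    moreover have "connected (g ` P)" "connected (g ` Q)"
      using PQ by (auto intro: connected_continuous_image continuous_on_subset[OF g_cont])
    ultimately have "\<bar>g w - g p\<bar> \<le> \<bar>g q - g p\<bar>"
      using PQ by (intro connected_inter_singleton_between) auto
    moreover have "g p \<in> {0..1}" "g q \<in> {0..1}" "g w \<in> {0..1}"
      using PQ g_range by blast+
    ultimately have "dist (f (g w)) (f (g p)) \<le> H * dist (f (g q)) (f (g p))"
      by (intro H) (auto simp: dist_real_def)
    moreover have "p \<in> \<gamma>" "q \<in> \<gamma>" "w \<in> \<gamma>"
      using PQ by blast+
    ultimately show "dist w p \<le> H * dist q p"
      using fg by simp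
  qed
qed

lemma quasiarc_not_singleton:
  assumes "quasiarc \<gamma>"
  shows "\<not> \<gamma> \<subseteq> {c}"
proof
  assume "\<gamma> \<subseteq> {c}"
  obtain f :: "real \<Rightarrow> 'a" where "quasisymmetric_on {0..1} f" and "f ` {0..1} = \<gamma>"
    using assms unfolding quasiarc_def by blast
  moreover have "f 0 \<in> \<gamma>" "f 1 \<in> \<gamma>"
    using \<open>f ` {0..1} = \<gamma>\<close> by auto
  ultimately have "inj_on f {0..1}" and "f 0 = f 1"
    using \<open>\<gamma> \<subseteq> {c}\<close> unfolding quasisymmetric_on_def by auto
  then show False
    by (auto dest: inj_onD)
qed

lemma holder_continuous_on:
  assumes "\<alpha> > 0" and holder: "\<And>x y. x \<in> A \<Longrightarrow> y \<in> A \<Longrightarrow> dist (f x) (f y) \<le> K * dist x y powr \<alpha>"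
  shows "continuous_on A f"
  unfolding continuous_on_iff
proof (intro ballI allI impI)
  fix x and e :: real
  assume "x \<in> A" "e > 0"
  define \<delta> where "\<delta> = (e / (\<bar>K\<bar> + 1)) powr (1 / \<alpha>)"
  have "\<delta> > 0"
    unfolding \<delta>_def using \<open>e > 0\<close> by simp
  moreover have "dist (f y) (f x) < e" if "y \<in> A" "dist y x < \<delta>" for y
  proof -
    have "dist y x powr \<alpha> < \<delta> powr \<alpha>"
      using that \<open>\<alpha> > 0\<close> by (intro powr_less_mono2) auto
    also have "\<dots> = e / (\<bar>K\<bar> + 1)"
      unfolding \<delta>_def using \<open>e > 0\<close> \<open>\<alpha> > 0\<close> by (simp add: powr_powr)
    finally have "(\<bar>K\<bar> + 1) * dist y x powr \<alpha> < e"
      by (simp add: field_simps add_pos_nonneg)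
    moreover have "K * dist y x powr \<alpha> \<le> (\<bar>K\<bar> + 1) * dist y x powr \<alpha>"
      by (intro mult_right_mono) auto
    ultimately show ?thesis
      using holder[OF that(1) \<open>x \<in> A\<close>] by linarith
  qed
  ultimately show "\<exists>\<delta>>0. \<forall>y\<in>A. dist y x < \<delta> \<longrightarrow> dist (f y) (f x) < e"
    by blast
qed

lemma bi_holder_imp_quasisymmetric_on:
  assumes "\<alpha> > 0" "K > 0"
    and bounds: "\<And>x y. x \<in> A \<Longrightarrow> y \<in> A \<Longrightarrow>
      inverse K * dist x y powr \<alpha> \<le> dist (f x) (f y) \<and> dist (f x) (f y) \<le> K * dist x y powr \<alpha>"
  shows "quasisymmetric_on A f"
  unfolding quasisymmetric_on_def
proof (intro conjI exI)
  have lower: "dist x y powr \<alpha> \<le> K * dist (f x) (f y)" if "x \<in> A" "y \<in> A" for x y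
    using bounds[OF that] \<open>K > 0\<close> by (simp add: field_simps)
  have upper: "dist (f x) (f y) \<le> K * dist x y powr \<alpha>" if "x \<in> A" "y \<in> A" for x y
    using bounds[OF that] by blast
  show "continuous_on A f"
    using upper \<open>\<alpha> > 0\<close> by (rule holder_continuous_on[rotated])
  show "inj_on f A"
    using lower \<open>\<alpha> > 0\<close> by (fastforce intro: inj_onI)
  define \<eta> where "\<eta> t = K\<^sup>2 * t powr \<alpha>" for t :: real
  show "continuous_on {0..} \<eta>"
    unfolding \<eta>_def using \<open>\<alpha> > 0\<close> by (intro continuous_intros continuous_on_powr') auto
  show "strict_mono_on {0..} \<eta>"
    unfolding strict_mono_on_def \<eta>_def using \<open>\<alpha> > 0\<close> \<open>K > 0\<close> by (auto intro: powr_less_mono2)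
  show "\<eta> 0 = 0"
    unfolding \<eta>_def using \<open>\<alpha> > 0\<close> by simp
  have "\<eta> ((y / K\<^sup>2) powr (1 / \<alpha>)) = y" if "y \<ge> 0" for y
    unfolding \<eta>_def using that \<open>\<alpha> > 0\<close> \<open>K > 0\<close> by (simp add: powr_powr)
  then have "{0..} \<subseteq> \<eta> ` {0..}"
    by (metis atLeast_iff image_eqI powr_ge_zero subsetI)
  moreover have "\<eta> ` {0..} \<subseteq> {0..}"
    unfolding \<eta>_def by auto
  ultimately show "\<eta> ` {0..} = {0..}"
    by blast
  show "\<forall>x\<in>A. \<forall>y\<in>A. \<forall>z\<in>A. \<forall>t\<ge>0. dist x z \<le> t * dist y z \<longrightarrow>
      dist (f x) (f z) \<le> \<eta> t * dist (f y) (f z)"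
  proof (intro ballI allI impI)
    fix x y z and t :: real
    assume xyz: "x \<in> A" "y \<in> A" "z \<in> A" and "t \<ge> 0" and "dist x z \<le> t * dist y z"
    have "dist (f x) (f z) \<le> K * dist x z powr \<alpha>"
      using upper xyz by blast
    also have "\<dots> \<le> K * (t powr \<alpha> * dist y z powr \<alpha>)"
      using \<open>dist x z \<le> t * dist y z\<close> \<open>t \<ge> 0\<close> \<open>\<alpha> > 0\<close> \<open>K > 0\<close>
      by (auto simp: powr_mult[symmetric] intro: powr_mono2)
    also have "\<dots> \<le> K * (t powr \<alpha> * (K * dist (f y) (f z)))"
      using lower xyz \<open>K > 0\<close> by (intro mult_left_mono) auto
    finally show "dist (f x) (f z) \<le> \<eta> t * dist (f y) (f z)"
      unfolding \<eta>_def by (simp add: power2_eq_square algebra_simps)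
  qed
qed

lemma bi_holder_constant:
  fixes d D :: "'b \<Rightarrow> 'b \<Rightarrow> real"
  assumes "c > 0" and "\<And>u v. u \<in> A \<Longrightarrow> v \<in> A \<Longrightarrow> d u v \<ge> 0"
    and "\<And>u v. u \<in> A \<Longrightarrow> v \<in> A \<Longrightarrow> c * d u v \<le> D u v \<and> D u v \<le> C * d u v"
  shows "\<exists>K\<ge>1. \<forall>u\<in>A. \<forall>v\<in>A. inverse K * d u v \<le> D u v \<and> D u v \<le> K * d u v"
proof (intro exI[of _ "max 1 (max C (inverse c))"] conjI ballI)
  fix u v
  assume uv: "u \<in> A" "v \<in> A"
  let ?K = "max 1 (max C (inverse c))"
  have "inverse ?K \<le> c"
    using \<open>c > 0\<close>
    by (metis inverse_inverse_eq le_imp_inverse_le max.cobounded2 max.coboundedI2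
        inverse_positive_iff_positive)
  then show "inverse ?K * d u v \<le> D u v"
    using assms(2,3)[OF uv] by (meson mult_right_mono order_trans)
  show "D u v \<le> ?K * d u v"
    using assms(2,3)[OF uv] by (meson max.cobounded1 max.coboundedI2 mult_right_mono order_trans)
qed simp

section \<open>The Hutchinson parameterization of an IFS path\<close>

lemma word_comp_Nil [simp]: "word_comp F [] = id"
  by (simp add: word_comp_def)

lemma word_comp_Cons [simp]: "word_comp F (i # \<sigma>) = F i \<circ> word_comp F \<sigma>"
  by (simp add: word_comp_def)

locale hutchinson_path =
  fixes S :: "nat \<Rightarrow> 'a::euclidean_space \<Rightarrow> 'a" and r :: "nat \<Rightarrow> real"
    and N :: nat and \<gamma> :: "'a set" and a b :: 'a and s :: real and \<phi> :: "real \<Rightarrow> 'a"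
  assumes contracting: "contracting_ifs N S r"
    and invariant: "invariant_set N S \<gamma>"
    and path: "ifs_path N S a b"
    and dimension: "similarity_dimension N r s"
    and parameterization: "hutchinson_parameterization N S r s a b \<phi>"
begin

text \<open>In the notation of the paper, \<open>knot i = t\<^sub>i\<close>, \<open>weight i = r\<^sub>i\<^sup>s = t\<^sub>i - t\<^sub>i\<^sub>-\<^sub>1\<close>,
  \<open>hs i = s\<^sub>i\<close> and \<open>phik k = \<phi>\<^sub>k\<close>.\<close>

abbreviation "weight i \<equiv> r i powr s"
abbreviation "knot \<equiv> hutch_t r s"
abbreviation "hs \<equiv> hutch_s r s"
abbreviation "piece i \<equiv> {knot (i - 1)..knot i}"
abbreviation "S_word \<equiv> word_comp S"
abbreviation "s_word \<equiv> word_comp hs"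
abbreviation "phik \<equiv> hutch_phik N S r s a b"

lemma N_ge_2: "N \<ge> 2"
  using contracting unfolding contracting_ifs_def by auto

lemma one_in_range: "1 \<in> {1..N}" and N_in_range: "N \<in> {1..N}"
  using N_ge_2 by auto

lemma r_pos: "i \<in> {1..N} \<Longrightarrow> 0 < r i"
  and r_less_1: "i \<in> {1..N} \<Longrightarrow> r i < 1"
  and dist_S: "i \<in> {1..N} \<Longrightarrow> dist (S i x) (S i y) = r i * dist x y"
  using contracting unfolding contracting_ifs_def similarity_with_ratio_def by auto

lemma s_pos: "s > 0"
  using dimension unfolding similarity_dimension_def by auto

lemma weight_pos: "i \<in> {1..N} \<Longrightarrow> 0 < weight i"
  using r_pos[of i] by simp

lemma weight_less_1: "i \<in> {1..N} \<Longrightarrow> weight i < 1"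
  using r_pos[of i] r_less_1[of i] s_pos powr_less_mono2[of s "r i" 1] by simp

lemma weight_root: "i \<in> {1..N} \<Longrightarrow> x \<ge> 0 \<Longrightarrow> (weight i * x) powr (1 / s) = r i * x powr (1 / s)"
  using r_pos[of i] s_pos by (simp add: powr_mult powr_powr)

lemma knot_0: "knot 0 = 0"
  and knot_Suc: "knot (Suc i) = knot i + weight (Suc i)"
  by (simp_all add: hutch_t_def)

lemma knot_N: "knot N = 1"
  using dimension by (simp add: hutch_t_def similarity_dimension_def)

lemma knot_pred: "i \<ge> 1 \<Longrightarrow> knot i = knot (i - 1) + weight i"
  by (cases i) (auto simp: knot_Suc)

lemma knot_mono: "i \<le> j \<Longrightarrow> knot i \<le> knot j"
  by (induction j rule: dec_induct) (auto simp: knot_Suc intro: order_trans)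

lemma knot_strict_mono:
  assumes "i < j" "j \<le> N"
  shows "knot i < knot j"
proof -
  have "0 < weight j"
    using assms by (intro weight_pos) auto
  moreover have "knot i \<le> knot (j - 1)"
    using assms by (intro knot_mono) auto
  ultimately show ?thesis
    using knot_pred[of j] assms by linarith
qed

lemma knot_nonneg: "knot i \<ge> 0"
  using knot_mono[of 0 i] knot_0 by simp

lemma knot_le_1: "i \<le> N \<Longrightarrow> knot i \<le> 1"
  using knot_mono knot_N by metis

lemma piece_subset: "i \<in> {1..N} \<Longrightarrow> piece i \<subseteq> {0..1}"
  using knot_nonneg[of "i - 1"] knot_le_1[of i] by auto

lemma hs_eq: "i \<ge> 1 \<Longrightarrow> hs i x = knot (i - 1) + weight i * x"
  unfolding hutch_s_def using knot_pred[of i] by (simp add: algebra_simps)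

lemma hs_0: "i \<ge> 1 \<Longrightarrow> hs i 0 = knot (i - 1)"
  and hs_1: "i \<ge> 1 \<Longrightarrow> hs i 1 = knot i"
  using hs_eq knot_pred by simp_all

lemma hs_diff: "i \<ge> 1 \<Longrightarrow> hs i y - hs i x = weight i * (y - x)"
  using hs_eq by (simp add: algebra_simps)

lemma hs_inj: "i \<in> {1..N} \<Longrightarrow> hs i x = hs i y \<Longrightarrow> x = y"
  using hs_eq weight_pos by fastforce

lemma hs_in_piece: "i \<in> {1..N} \<Longrightarrow> x \<in> {0..1} \<Longrightarrow> hs i x \<in> piece i"
  using hs_eq[of i x] knot_pred[of i] weight_pos[of i]
  by (auto simp: mult_le_cancel_left1 intro: mult_left_le)

lemma piece_preimage:
  assumes "i \<in> {1..N}" "t \<in> piece i"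
  obtains x where "x \<in> {0..1}" "t = hs i x"
proof
  show "t = hs i ((t - knot (i - 1)) / weight i)"
    using hs_eq[of i] weight_pos[OF assms(1)] assms(1) by simp
  show "(t - knot (i - 1)) / weight i \<in> {0..1}"
    using assms knot_pred[of i] weight_pos[OF assms(1)] by (auto simp: field_simps)
qed

lemma hs_in_unit: "i \<in> {1..N} \<Longrightarrow> x \<in> {0..1} \<Longrightarrow> hs i x \<in> {0..1}"
  using hs_in_piece piece_subset by blast

lemma pieces_cover: "t \<in> {0..1} \<Longrightarrow> \<exists>i\<in>{1..N}. t \<in> piece i"
proof -
  assume t: "t \<in> {0..1}"
  have "\<exists>i\<in>{1..n}. t \<in> piece i" if "1 \<le> n" "t \<le> knot n" for n
    using that
  proof (induction n rule: dec_induct)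
    case base
    then show ?case
      using t knot_0 by auto
  next
    case (step n)
    show ?case
    proof (cases "t \<le> knot n")
      case True
      then show ?thesis
        using step.IH by fastforce
    next
      case False
      then have "t \<in> piece (Suc n)"
        using step.prems by simp
      then show ?thesis
        by (intro bexI[of _ "Suc n"]) auto
    qed
  qed
  then show ?thesis
    using N_ge_2 t knot_N by auto
qed

lemma hs_eq_hs_cases:
  assumes "i \<in> {1..N}" "j \<in> {1..N}" "i < j" "x \<in> {0..1}" "y \<in> {0..1}" "hs i x = hs j y"
  shows "x = 1 \<and> y = 0 \<and> j = Suc i"
proof -
  have "hs i x \<le> knot i" "knot (j - 1) \<le> hs j y"
    using hs_in_piece[OF assms(1,4)] hs_in_piece[OF assms(2,5)] by auto
  moreover have "knot i \<le> knot (j - 1)"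
    using assms(3) by (intro knot_mono) auto
  ultimately have "hs i x = knot i" "hs j y = knot (j - 1)" "knot i = knot (j - 1)"
    using assms(6) by linarith+
  then have top: "hs i x = hs i 1" and bot: "hs j y = hs j 0"
    using assms(1,2) hs_0[of j] hs_1[of i] by simp_all
  have "j = Suc i"
  proof (rule ccontr)
    assume "j \<noteq> Suc i"
    then have "knot i < knot (j - 1)"
      using assms(2,3) by (intro knot_strict_mono) auto
    then show False
      using \<open>knot i = knot (j - 1)\<close> by simp
  qed
  then show ?thesis
    using hs_inj[OF assms(1) top] hs_inj[OF assms(2) bot] by blast
qed

lemma hs_eq_1:
  assumes "i \<in> {1..N}" "x \<in> {0..1}" "hs i x = 1"
  shows "i = N \<and> x = 1"
proof -
  have N1: "hs N 1 = 1"
    using hs_1[of N] knot_N N_ge_2 by simp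
  show ?thesis
  proof (cases "i = N")
    case True
    then show ?thesis
      using hs_inj[OF N_in_range, of x 1] N1 assms(3) by simp
  next
    case False
    then have "i < N"
      using assms(1) by simp
    then show ?thesis
      using hs_eq_hs_cases[OF assms(1) N_in_range \<open>i < N\<close> assms(2), of 1] N1 assms(3) by simp
  qed
qed

lemma hs_eq_0:
  assumes "i \<in> {1..N}" "x \<in> {0..1}" "hs i x = 0"
  shows "i = 1 \<and> x = 0"
proof -
  have "hs 1 0 = 0"
    using hs_0[of 1] knot_0 by simp
  show ?thesis
  proof (cases "i = 1")
    case True
    then show ?thesis
      using hs_inj[OF one_in_range, of x 0] \<open>hs 1 0 = 0\<close> assms(3) by simp
  next
    case False
    then have "1 < i"
      using assms(1) by simp
    then show ?thesis
      using hs_eq_hs_cases[OF one_in_range assms(1) \<open>1 < i\<close> _ assms(2), of 0] \<open>hs 1 0 = 0\<close> assms(3)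
      by simp
  qed
qed

lemma S_1_a: "S 1 a = a" and S_N_b: "S N b = b"
  and S_b_eq_S_Suc_a: "i \<in> {1..N-1} \<Longrightarrow> S i b = S (Suc i) a"
  using path unfolding ifs_path_def by auto

lemma words_Suc: "\<sigma> \<in> words N (Suc k) \<longleftrightarrow> (\<exists>i \<sigma>'. \<sigma> = i # \<sigma>' \<and> i \<in> {1..N} \<and> \<sigma>' \<in> words N k)"
  by (cases \<sigma>) (auto simp: words_def)

lemma s_word_in_unit: "set \<sigma> \<subseteq> {1..N} \<Longrightarrow> x \<in> {0..1} \<Longrightarrow> s_word \<sigma> x \<in> {0..1}"
  by (induction \<sigma>) (auto simp: hs_in_unit simp del: atLeastAtMost_iff)

lemma s_word_eq_1:
  "set \<sigma> \<subseteq> {1..N} \<Longrightarrow> x \<in> {0..1} \<Longrightarrow> s_word \<sigma> x = 1 \<Longrightarrow> S_word \<sigma> (hutch_phi0 a b x) = b"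
proof (induction \<sigma>)
  case Nil
  then show ?case
    by (simp add: hutch_phi0_def)
next
  case (Cons i \<sigma>)
  then have "i = N \<and> s_word \<sigma> x = 1"
    using s_word_in_unit by (intro hs_eq_1) auto
  then show ?case
    using Cons S_N_b by simp
qed

lemma s_word_eq_0:
  "set \<sigma> \<subseteq> {1..N} \<Longrightarrow> x \<in> {0..1} \<Longrightarrow> s_word \<sigma> x = 0 \<Longrightarrow> S_word \<sigma> (hutch_phi0 a b x) = a"
proof (induction \<sigma>)
  case Nil
  then show ?case
    by (simp add: hutch_phi0_def)
next
  case (Cons i \<sigma>)
  then have "i = 1 \<and> s_word \<sigma> x = 0"
    using s_word_in_unit by (intro hs_eq_0) auto
  then show ?case
    using Cons S_1_a by simp
qed

text \<open>Where the first letters differ, the common parameter is a junction point \<open>t\<^sub>i\<close>, and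
  the path condition \<open>S\<^sub>i(b) = S\<^sub>i\<^sub>+\<^sub>1(a)\<close> glues the two sides.\<close>
lemma S_word_phi0_junction:
  assumes "i \<in> {1..N}" "j \<in> {1..N}" "i < j" "set \<sigma> \<subseteq> {1..N}" "set \<tau> \<subseteq> {1..N}"
    and "x \<in> {0..1}" "y \<in> {0..1}" "hs i (s_word \<sigma> x) = hs j (s_word \<tau> y)"
  shows "S_word (i # \<sigma>) (hutch_phi0 a b x) = S_word (j # \<tau>) (hutch_phi0 a b y)"
proof -
  have "s_word \<sigma> x = 1" "s_word \<tau> y = 0" "j = Suc i"
    using hs_eq_hs_cases[OF assms(1-3) s_word_in_unit[OF assms(4,6)] s_word_in_unit[OF assms(5,7)]
        assms(8)] by auto
  then have "S_word (i # \<sigma>) (hutch_phi0 a b x) = S i b"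
    using s_word_eq_1[OF assms(4,6)] by simp
  also have "\<dots> = S j a"
    using S_b_eq_S_Suc_a[of i] assms(1,2) \<open>j = Suc i\<close> by auto
  also have "\<dots> = S_word (j # \<tau>) (hutch_phi0 a b y)"
    using s_word_eq_0[OF assms(5,7)] \<open>s_word \<tau> y = 0\<close> by simp
  finally show ?thesis .
qed

lemma S_word_phi0_consistent:
  "set \<sigma> \<subseteq> {1..N} \<Longrightarrow> set \<tau> \<subseteq> {1..N} \<Longrightarrow> length \<sigma> = length \<tau> \<Longrightarrow> x \<in> {0..1} \<Longrightarrow>
   y \<in> {0..1} \<Longrightarrow> s_word \<sigma> x = s_word \<tau> y \<Longrightarrow>
   S_word \<sigma> (hutch_phi0 a b x) = S_word \<tau> (hutch_phi0 a b y)"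
proof (induction \<sigma> arbitrary: \<tau>)
  case Nil
  then show ?case
    by simp
next
  case (Cons i \<sigma> \<tau>0)
  then obtain j \<tau> where \<tau>0: "\<tau>0 = j # \<tau>"
    by (cases \<tau>0) auto
  have ij: "i \<in> {1..N}" "j \<in> {1..N}" and words: "set \<sigma> \<subseteq> {1..N}" "set \<tau> \<subseteq> {1..N}"
    and len: "length \<sigma> = length \<tau>"
    using Cons \<tau>0 by auto
  have eq: "hs i (s_word \<sigma> x) = hs j (s_word \<tau> y)"
    using Cons.prems(6) \<tau>0 by simp
  consider "i = j" | "i < j" | "j < i"
    by linarith
  then show ?case
  proof cases
    case 1
    then have "s_word \<sigma> x = s_word \<tau> y"
      using hs_inj[OF ij(1)] eq by auto
    then show ?thesis
      using Cons.IH[OF words len Cons.prems(4,5)] \<tau>0 1 by simp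
  next
    case 2
    then show ?thesis
      using S_word_phi0_junction[OF ij 2 words Cons.prems(4,5) eq] \<tau>0 by simp
  next
    case 3
    then show ?thesis
      using S_word_phi0_junction[OF ij(2,1) 3 words(2,1) Cons.prems(5,4) eq[symmetric]] \<tau>0
      by simp
  qed
qed

lemma s_word_cover: "t \<in> {0..1} \<Longrightarrow> \<exists>\<sigma>\<in>words N k. \<exists>x\<in>{0..1}. t = s_word \<sigma> x"
proof (induction k arbitrary: t)
  case 0
  then show ?case
    by (auto simp: words_def)
next
  case (Suc k)
  obtain i where i: "i \<in> {1..N}" "t \<in> piece i"
    using pieces_cover[OF Suc.prems] by blast
  then obtain x where x: "x \<in> {0..1}" and t: "t = hs i x"
    by (rule piece_preimage)
  obtain \<sigma> y where "\<sigma> \<in> words N k" "y \<in> {0..1}" "x = s_word \<sigma> y"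
    using Suc.IH[OF x] by blast
  then show ?case
    using i(1) t by (intro bexI[of _ "i # \<sigma>"] bexI[of _ y]) (auto simp: words_Suc)
qed

lemma phik_s_word:
  assumes "\<tau> \<in> words N k" "y \<in> {0..1}"
  shows "phik k (s_word \<tau> y) = S_word \<tau> (hutch_phi0 a b y)"
proof -
  let ?t = "s_word \<tau> y"
  define \<sigma> where "\<sigma> = (SOME \<sigma>. \<sigma> \<in> words N k \<and> ?t \<in> s_word \<sigma> ` {0..1})"
  have \<tau>: "set \<tau> \<subseteq> {1..N}" "length \<tau> = k"
    using assms(1) by (auto simp: words_def)
  have "\<tau> \<in> words N k \<and> ?t \<in> s_word \<tau> ` {0..1}"
    using assms by blast
  then have "\<sigma> \<in> words N k \<and> ?t \<in> s_word \<sigma> ` {0..1}"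
    unfolding \<sigma>_def by (rule someI)
  then have \<sigma>: "set \<sigma> \<subseteq> {1..N}" "length \<sigma> = length \<tau>" and t: "?t \<in> s_word \<sigma> ` {0..1}"
    using \<tau>(2) by (auto simp: words_def)
  define x where "x = inv_into {0..1} (s_word \<sigma>) ?t"
  have x: "x \<in> {0..1}" "s_word \<sigma> x = ?t"
    unfolding x_def using t by (rule inv_into_into, rule f_inv_into_f)
  have "phik k ?t = S_word \<sigma> (hutch_phi0 a b x)"
    unfolding hutch_phik_def Let_def \<sigma>_def[symmetric] x_def ..
  also have "\<dots> = S_word \<tau> (hutch_phi0 a b y)"
    using S_word_phi0_consistent[OF \<sigma>(1) \<tau>(1) \<sigma>(2) x(1) assms(2) x(2)] .
  finally show ?thesis .
qed

lemma phik_Suc: "i \<in> {1..N} \<Longrightarrow> t \<in> {0..1} \<Longrightarrow> phik (Suc k) (hs i t) = S i (phik k t)"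
proof -
  assume i: "i \<in> {1..N}" and t: "t \<in> {0..1}"
  obtain \<tau> y where \<tau>: "\<tau> \<in> words N k" and y: "y \<in> {0..1}" and ty: "t = s_word \<tau> y"
    using s_word_cover[OF t] by blast
  have "i # \<tau> \<in> words N (Suc k)"
    using i \<tau> by (simp add: words_Suc)
  then show ?thesis
    using phik_s_word[OF _ y, of "i # \<tau>"] phik_s_word[OF \<tau> y] ty by simp
qed

lemma phik_tendsto: "t \<in> {0..1} \<Longrightarrow> (\<lambda>k. phik k t) \<longlonglongrightarrow> \<phi> t"
  using parameterization unfolding hutchinson_parameterization_def by (rule tendsto_uniform_limitI)

lemma continuous_on_S: "i \<in> {1..N} \<Longrightarrow> continuous_on A (S i)"
  using dist_S[of i] r_pos[of i]
  by (intro lipschitz_on_continuous_on[of "r i"]) (auto simp: lipschitz_on_def)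

lemma phi_hs:
  assumes i: "i \<in> {1..N}" and t: "t \<in> {0..1}"
  shows "\<phi> (hs i t) = S i (\<phi> t)"
proof (rule LIMSEQ_unique)
  show "(\<lambda>k. phik (Suc k) (hs i t)) \<longlonglongrightarrow> \<phi> (hs i t)"
    using hs_in_unit[OF i t] by (intro LIMSEQ_Suc phik_tendsto)
  have "isCont (S i) (\<phi> t)"
    using continuous_on_S[OF i, of UNIV] by (simp add: continuous_on_eq_continuous_at)
  then show "(\<lambda>k. phik (Suc k) (hs i t)) \<longlonglongrightarrow> S i (\<phi> t)"
    unfolding phik_Suc[OF i t] using phik_tendsto[OF t] by (rule isCont_tendsto_compose)
qed

lemma compact_attractor: "compact \<gamma>" and attractor_nonempty: "\<gamma> \<noteq> {}"
  and attractor_eq: "\<gamma> = (\<Union>i\<in>{1..N}. S i ` \<gamma>)"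
  using invariant unfolding invariant_set_def by auto

lemma S_in_attractor:
  assumes "i \<in> {1..N}" "x \<in> \<gamma>"
  shows "S i x \<in> \<gamma>"
proof -
  have "S i x \<in> (\<Union>i\<in>{1..N}. S i ` \<gamma>)"
    using assms by blast
  then show ?thesis
    using attractor_eq by metis
qed

lemma S_word_in_attractor: "set \<sigma> \<subseteq> {1..N} \<Longrightarrow> x \<in> \<gamma> \<Longrightarrow> S_word \<sigma> x \<in> \<gamma>"
  by (induction \<sigma>) (auto intro: S_in_attractor)

lemma dist_S_word:
  assumes "\<And>i. i \<in> {1..N} \<Longrightarrow> r i \<le> \<rho>"
  shows "set \<sigma> \<subseteq> {1..N} \<Longrightarrow> dist (S_word \<sigma> x) (S_word \<sigma> y) \<le> \<rho> ^ length \<sigma> * dist x y"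
proof (induction \<sigma>)
  case (Cons i \<sigma>)
  then have i: "i \<in> {1..N}"
    by auto
  have "dist (S_word (i # \<sigma>) x) (S_word (i # \<sigma>) y) = r i * dist (S_word \<sigma> x) (S_word \<sigma> y)"
    using dist_S[OF i] by simp
  also have "\<dots> \<le> \<rho> * (\<rho> ^ length \<sigma> * dist x y)"
    using Cons assms[OF i] r_pos[OF i] by (intro mult_mono) auto
  finally show ?case
    by simp
qed simp

lemma infdist_phik_le:
  obtains \<rho> M where "0 < \<rho>" "\<rho> < 1" "\<And>k t. t \<in> {0..1} \<Longrightarrow> infdist (phik k t) \<gamma> \<le> \<rho> ^ k * M"
proof -
  define \<rho> where "\<rho> = Max (r ` {1..N})"
  have \<rho>: "r i \<le> \<rho>" if "i \<in> {1..N}" for i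
    unfolding \<rho>_def using that by auto
  have "\<rho> < 1"
    unfolding \<rho>_def using N_ge_2 r_less_1 by (subst Max_less_iff) auto
  have "\<rho> > 0"
    using \<rho>[OF one_in_range] r_pos[OF one_in_range] by linarith
  obtain q where q: "q \<in> \<gamma>"
    using attractor_nonempty by auto
  define M where "M = dist a q + dist a b"
  have segment: "dist (hutch_phi0 a b x) q \<le> M" if "x \<in> {0..1}" for x
  proof -
    have "dist (hutch_phi0 a b x) a = x * dist a b"
      using that by (simp add: hutch_phi0_def dist_norm norm_minus_commute)
    also have "\<dots> \<le> dist a b"
      using that by (simp add: mult_left_le_one_le)
    finally show ?thesis
      unfolding M_def using dist_triangle[of "hutch_phi0 a b x" q a] by (simp add: dist_commute)
  qed
  have "infdist (phik k t) \<gamma> \<le> \<rho> ^ k * M" if t: "t \<in> {0..1}" for k t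
  proof -
    obtain \<sigma> x where \<sigma>: "\<sigma> \<in> words N k" and x: "x \<in> {0..1}" and tx: "t = s_word \<sigma> x"
      using s_word_cover[OF t] by blast
    then have \<sigma>': "set \<sigma> \<subseteq> {1..N}" "length \<sigma> = k"
      by (auto simp: words_def)
    have "infdist (phik k t) \<gamma> \<le> dist (S_word \<sigma> (hutch_phi0 a b x)) (S_word \<sigma> q)"
      using infdist_le[OF S_word_in_attractor[OF \<sigma>'(1) q]] phik_s_word[OF \<sigma> x] tx by simp
    also have "\<dots> \<le> \<rho> ^ k * dist (hutch_phi0 a b x) q"
      using dist_S_word[OF \<rho> \<sigma>'(1)] \<sigma>'(2) by auto
    also have "\<dots> \<le> \<rho> ^ k * M"
      using \<open>\<rho> > 0\<close> segment[OF x] by (intro mult_left_mono) auto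
    finally show ?thesis .
  qed
  then show ?thesis
    using that \<open>\<rho> > 0\<close> \<open>\<rho> < 1\<close> by blast
qed

lemma phi_in_attractor: "t \<in> {0..1} \<Longrightarrow> \<phi> t \<in> \<gamma>"
proof -
  assume t: "t \<in> {0..1}"
  obtain \<rho> M where "0 < \<rho>" "\<rho> < 1" and bound: "\<And>k. infdist (phik k t) \<gamma> \<le> \<rho> ^ k * M"
    using infdist_phik_le t by metis
  have "(\<lambda>k. infdist (phik k t) \<gamma>) \<longlonglongrightarrow> infdist (\<phi> t) \<gamma>"
    by (intro tendsto_infdist phik_tendsto t)
  moreover have "(\<lambda>k. \<rho> ^ k * M) \<longlonglongrightarrow> 0"
    using \<open>0 < \<rho>\<close> \<open>\<rho> < 1\<close> by (intro tendsto_mult_left_zero LIMSEQ_power_zero) auto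
  ultimately have "infdist (\<phi> t) \<gamma> \<le> 0"
    by (rule LIMSEQ_le) (use bound in blast)
  then have "infdist (\<phi> t) \<gamma> = 0"
    using infdist_nonneg[of "\<phi> t" \<gamma>] by linarith
  then show ?thesis
    using in_closed_iff_infdist_zero[OF compact_imp_closed[OF compact_attractor] attractor_nonempty]
    by blast
qed

lemma fixed_point_unique:
  assumes "i \<in> {1..N}" "S i x = x" "S i y = y"
  shows "x = y"
proof -
  have "dist x y = r i * dist x y"
    using dist_S[OF assms(1), of x y] assms(2,3) by simp
  then have "(1 - r i) * dist x y = 0"
    by (simp add: algebra_simps)
  then show ?thesis
    using r_less_1[OF assms(1)] by simp
qed

lemma phi_0: "\<phi> 0 = a"
proof -
  have "S 1 (\<phi> 0) = \<phi> 0"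
    using phi_hs[OF one_in_range, of 0] hs_0[of 1] knot_0 by simp
  then show ?thesis
    using fixed_point_unique[OF one_in_range _ S_1_a] by blast
qed

lemma phi_1: "\<phi> 1 = b"
proof -
  have "S N (\<phi> 1) = \<phi> 1"
    using phi_hs[OF N_in_range, of 1] hs_1[of N] knot_N N_ge_2 by simp
  then show ?thesis
    using fixed_point_unique[OF N_in_range _ S_N_b] by blast
qed

lemma phi_knot: "i \<in> {1..N} \<Longrightarrow> \<phi> (knot i) = S i b"
  using phi_hs[of i 1] hs_1[of i] phi_1 by simp

lemma phi_knot_pred: "i \<in> {1..N} \<Longrightarrow> \<phi> (knot (i - 1)) = S i a"
  using phi_hs[of i 0] hs_0[of i] phi_0 by simp

lemma phi_in_piece_image: "i \<in> {1..N} \<Longrightarrow> u \<in> piece i \<Longrightarrow> \<phi> u \<in> S i ` \<gamma>"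
  by (metis piece_preimage phi_hs phi_in_attractor imageI)

lemma dist_phi_le_diameter: "u \<in> {0..1} \<Longrightarrow> v \<in> {0..1} \<Longrightarrow> dist (\<phi> u) (\<phi> v) \<le> diameter \<gamma>"
  using phi_in_attractor compact_imp_bounded[OF compact_attractor] by (intro diameter_bounded_bound) auto

section \<open>The Hoelder quotient and self-similar induction\<close>

definition holder_quotient :: "real \<Rightarrow> real \<Rightarrow> real" where
  "holder_quotient u v = dist (\<phi> u) (\<phi> v) / \<bar>u - v\<bar> powr (1 / s)"

lemma le_holder_quotient_iff:
  "u \<noteq> v \<Longrightarrow> c \<le> holder_quotient u v \<longleftrightarrow> c * \<bar>u - v\<bar> powr (1 / s) \<le> dist (\<phi> u) (\<phi> v)"
  unfolding holder_quotient_def by (simp add: pos_le_divide_eq)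

lemma holder_quotient_le_iff:
  "u \<noteq> v \<Longrightarrow> holder_quotient u v \<le> C \<longleftrightarrow> dist (\<phi> u) (\<phi> v) \<le> C * \<bar>u - v\<bar> powr (1 / s)"
  unfolding holder_quotient_def by (simp add: pos_divide_le_eq)

lemma dist_phi_le_holder_quotient:
  assumes "u \<in> {0..1}" "v \<in> {0..1}" "u \<noteq> v"
  shows "dist (\<phi> u) (\<phi> v) \<le> holder_quotient u v"
proof -
  have "0 < \<bar>u - v\<bar> powr (1 / s)" "\<bar>u - v\<bar> powr (1 / s) \<le> 1"
    using assms s_pos by (auto intro: powr_le1)
  then have "dist (\<phi> u) (\<phi> v) * \<bar>u - v\<bar> powr (1 / s) \<le> dist (\<phi> u) (\<phi> v)"
    by (simp add: mult_left_le)
  then show ?thesis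
    unfolding holder_quotient_def using \<open>0 < \<bar>u - v\<bar> powr (1 / s)\<close> by (simp add: le_divide_eq)
qed

lemma holder_quotient_hs:
  assumes "i \<in> {1..N}" "u \<in> {0..1}" "v \<in> {0..1}"
  shows "holder_quotient (hs i u) (hs i v) = holder_quotient u v"
proof -
  have "\<bar>hs i u - hs i v\<bar> powr (1 / s) = r i * \<bar>u - v\<bar> powr (1 / s)"
    using hs_diff[of i u v] weight_root[of i "\<bar>u - v\<bar>"] weight_pos[of i] assms(1)
    by (simp add: abs_mult)
  then show ?thesis
    unfolding holder_quotient_def using assms phi_hs dist_S r_pos[OF assms(1)] by simp
qed

text \<open>Induction on the level at which \<open>u\<close> and \<open>v\<close> get separated, which is finite since every
  \<open>s\<^sub>i\<close> shrinks distances by the factor \<open>r\<^sub>i\<^sup>s \<le> max\<^sub>j r\<^sub>j\<^sup>s < 1\<close>.\<close>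
lemma self_similar_induct [consumes 3, case_names step base]:
  assumes "0 \<le> u" "u < v" "v \<le> 1"
    and step: "\<And>i u v. i \<in> {1..N} \<Longrightarrow> 0 \<le> u \<Longrightarrow> u < v \<Longrightarrow> v \<le> 1 \<Longrightarrow> Q u v \<Longrightarrow>
      Q (hs i u) (hs i v)"
    and base: "\<And>u v. 0 \<le> u \<Longrightarrow> u < v \<Longrightarrow> v \<le> 1 \<Longrightarrow>
      \<forall>i\<in>{1..N}. \<not> (u \<in> piece i \<and> v \<in> piece i) \<Longrightarrow> Q u v"
  shows "Q u v"
proof -
  define L where "L = Max (weight ` {1..N})"
  have L: "weight i \<le> L" if "i \<in> {1..N}" for i
    unfolding L_def using that by auto
  have "L < 1"
    unfolding L_def using N_ge_2 weight_less_1 by (subst Max_less_iff) auto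
  obtain n where "L ^ n < v - u"
    using real_arch_pow_inv[of "v - u" L] assms(1-3) \<open>L < 1\<close> by auto
  then show ?thesis
    using assms(1-3)
  proof (induction n arbitrary: u v)
    case 0
    then show ?case
      by simp
  next
    case (Suc n)
    show ?case
    proof (cases "\<exists>i\<in>{1..N}. u \<in> piece i \<and> v \<in> piece i")
      case False
      then show ?thesis
        using base Suc.prems by blast
    next
      case True
      then obtain i where i: "i \<in> {1..N}" and uv_piece: "u \<in> piece i" "v \<in> piece i"
        by blast
      obtain x y where xy: "x \<in> {0..1}" "y \<in> {0..1}" and uv: "u = hs i x" "v = hs i y"
        using piece_preimage[OF i uv_piece(1)] piece_preimage[OF i uv_piece(2)] by metis
      have diff: "v - u = weight i * (y - x)"
        using hs_diff[of i y x] i uv by simp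
      then have "0 < weight i * (y - x)"
        using Suc.prems(3) by linarith
      then have "x < y"
        using zero_less_mult_pos weight_pos[OF i] by force
      have "L * L ^ n < weight i * (y - x)"
        using Suc.prems(1) diff by simp
      also have "\<dots> \<le> L * (y - x)"
        using L[OF i] \<open>x < y\<close> by (intro mult_right_mono) auto
      finally have "L ^ n < y - x"
        using L[OF i] weight_pos[OF i] by (simp add: mult_less_cancel_left)
      then have "Q x y"
        using Suc.IH \<open>x < y\<close> xy by auto
      then show ?thesis
        using step[OF i] xy \<open>x < y\<close> uv by auto
    qed
  qed
qed

lemma holder_quotient_induct [consumes 3, case_names base]:
  assumes "0 \<le> u" "u < v" "v \<le> 1"
    and "\<And>u v. 0 \<le> u \<Longrightarrow> u < v \<Longrightarrow> v \<le> 1 \<Longrightarrow>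
      \<forall>i\<in>{1..N}. \<not> (u \<in> piece i \<and> v \<in> piece i) \<Longrightarrow> P (holder_quotient u v)"
  shows "P (holder_quotient u v)"
  using assms(1-3)
proof (induction rule: self_similar_induct)
  case (step i u v)
  then show ?case
    by (simp add: holder_quotient_hs)
qed (rule assms(4))

lemma holder_quotient_right_end_induct [consumes 2, case_names base]:
  assumes "0 \<le> x" "x < 1"
    and "\<And>x. 0 \<le> x \<Longrightarrow> x < knot (N - 1) \<Longrightarrow> P (holder_quotient x 1)"
  shows "P (holder_quotient x 1)"
proof -
  have "1 \<in> piece N"
    using knot_N knot_le_1[of "N - 1"] by auto
  have "v = 1 \<longrightarrow> P (holder_quotient u v)" if "0 \<le> u" "u < v" "v \<le> 1" for u v
    using that
  proof (induction rule: self_similar_induct)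
    case (step i u v)
    then show ?case
      using hs_eq_1[of i v] holder_quotient_hs[of i u v] by auto
  next
    case (base u v)
    show ?case
    proof
      assume "v = 1"
      then have "u \<notin> piece N"
        using base(4) \<open>1 \<in> piece N\<close> N_in_range by blast
      then have "u < knot (N - 1)"
        using base(2,3) knot_N by auto
      then show "P (holder_quotient u v)"
        using assms(3) base(1) \<open>v = 1\<close> by blast
    qed
  qed
  then show ?thesis
    using assms(1,2) by blast
qed

lemma holder_quotient_left_end_induct [consumes 2, case_names base]:
  assumes "0 < x" "x \<le> 1"
    and "\<And>x. knot 1 < x \<Longrightarrow> x \<le> 1 \<Longrightarrow> P (holder_quotient 0 x)"
  shows "P (holder_quotient 0 x)"
proof -
  have "0 \<in> piece 1"
    using knot_0 knot_nonneg[of 1] by auto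
  have "u = 0 \<longrightarrow> P (holder_quotient u v)" if "0 \<le> u" "u < v" "v \<le> 1" for u v
    using that
  proof (induction rule: self_similar_induct)
    case (step i u v)
    then show ?case
      using hs_eq_0[of i u] holder_quotient_hs[of i u v] by auto
  next
    case (base u v)
    show ?case
    proof
      assume "u = 0"
      then have "v \<notin> piece 1"
        using base(4) \<open>0 \<in> piece 1\<close> one_in_range by blast
      then have "knot 1 < v"
        using base(1,2) \<open>u = 0\<close> knot_0 by auto
      then show "P (holder_quotient u v)"
        using assms(3) base(3) \<open>u = 0\<close> by blast
    qed
  qed
  then show ?thesis
    using assms(1,2) by blast
qed

lemma holder_quotient_to_knot:
  assumes "i \<in> {1..N}" "u \<in> piece i" "u \<noteq> knot i"
  obtains x where "0 \<le> x" "x < 1" "holder_quotient u (knot i) = holder_quotient x 1"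
proof -
  obtain x where x: "x \<in> {0..1}" "u = hs i x"
    using piece_preimage[OF assms(1,2)] .
  have "x \<noteq> 1"
    using assms(1,3) x(2) hs_1[of i] by auto
  have "holder_quotient u (knot i) = holder_quotient x 1"
    using holder_quotient_hs[OF assms(1) x(1), of 1] hs_1[of i] assms(1) x(2) by simp
  then show ?thesis
    using that[of x] x(1) \<open>x \<noteq> 1\<close> by simp
qed

lemma holder_quotient_from_knot_pred:
  assumes "i \<in> {1..N}" "v \<in> piece i" "v \<noteq> knot (i - 1)"
  obtains x where "0 < x" "x \<le> 1" "holder_quotient (knot (i - 1)) v = holder_quotient 0 x"
proof -
  obtain x where x: "x \<in> {0..1}" "v = hs i x"
    using piece_preimage[OF assms(1,2)] .
  have "x \<noteq> 0"
    using assms(1,3) x(2) hs_0[of i] by auto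
  have "holder_quotient (knot (i - 1)) v = holder_quotient 0 x"
    using holder_quotient_hs[OF assms(1) _ x(1), of 0] hs_0[of i] assms(1) x(2) by simp
  then show ?thesis
    using that[of x] x(1) \<open>x \<noteq> 0\<close> by simp
qed

section \<open>The upper Hoelder bound\<close>

definition min_weight :: real where
  "min_weight = Min (weight ` {1..N})"

definition upper_const :: real where
  "upper_const = diameter \<gamma> / min_weight powr (1 / s)"

lemma min_weight_le: "i \<in> {1..N} \<Longrightarrow> min_weight \<le> weight i"
  unfolding min_weight_def by auto

lemma min_weight_pos: "min_weight > 0"
  unfolding min_weight_def using N_ge_2 weight_pos by (subst Min_gr_iff) auto

lemma diameter_attractor_nonneg: "diameter \<gamma> \<ge> 0"
  using compact_imp_bounded[OF compact_attractor] by (rule diameter_ge_0)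

lemma upper_const_nonneg: "upper_const \<ge> 0"
  unfolding upper_const_def using diameter_attractor_nonneg by simp

lemma holder_quotient_le_if_gap:
  assumes "u \<in> {0..1}" "v \<in> {0..1}" "min_weight \<le> \<bar>u - v\<bar>"
  shows "holder_quotient u v \<le> upper_const"
  unfolding holder_quotient_def upper_const_def
proof (rule frac_le)
  show "min_weight powr (1 / s) \<le> \<bar>u - v\<bar> powr (1 / s)"
    using assms(3) min_weight_pos s_pos by (intro powr_mono2) auto
qed (use assms dist_phi_le_diameter diameter_attractor_nonneg min_weight_pos in auto)

lemma holder_quotient_right_end_le: "0 \<le> x \<Longrightarrow> x < 1 \<Longrightarrow> holder_quotient x 1 \<le> upper_const"
proof (induction rule: holder_quotient_right_end_induct)
  case (base x)
  then have "min_weight \<le> \<bar>x - 1\<bar>"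
    using min_weight_le[OF N_in_range] knot_pred[of N] knot_N N_ge_2 by auto
  then show ?case
    using base knot_le_1[of "N - 1"] by (intro holder_quotient_le_if_gap) auto
qed

lemma holder_quotient_left_end_le: "0 < x \<Longrightarrow> x \<le> 1 \<Longrightarrow> holder_quotient 0 x \<le> upper_const"
proof (induction rule: holder_quotient_left_end_induct)
  case (base x)
  then have "min_weight \<le> \<bar>0 - x\<bar>"
    using min_weight_le[OF one_in_range] knot_pred[of 1] knot_0 by auto
  then show ?case
    using base knot_nonneg[of 1] by (intro holder_quotient_le_if_gap) auto
qed

lemma dist_phi_knot_le:
  assumes "i \<in> {1..N}" "u \<in> piece i"
  shows "dist (\<phi> u) (\<phi> (knot i)) \<le> upper_const * (knot i - u) powr (1 / s)"
proof (cases "u = knot i")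
  case False
  then obtain x where "0 \<le> x" "x < 1" "holder_quotient u (knot i) = holder_quotient x 1"
    using holder_quotient_to_knot assms by blast
  then have "holder_quotient u (knot i) \<le> upper_const"
    using holder_quotient_right_end_le by simp
  then show ?thesis
    using holder_quotient_le_iff[OF False] assms(2) by simp
qed simp

lemma dist_phi_knot_pred_le:
  assumes "i \<in> {1..N}" "v \<in> piece i"
  shows "dist (\<phi> (knot (i - 1))) (\<phi> v) \<le> upper_const * (v - knot (i - 1)) powr (1 / s)"
proof (cases "v = knot (i - 1)")
  case False
  then obtain x where "0 < x" "x \<le> 1" "holder_quotient (knot (i - 1)) v = holder_quotient 0 x"
    using holder_quotient_from_knot_pred assms by blast
  then have "holder_quotient (knot (i - 1)) v \<le> upper_const"
    using holder_quotient_left_end_le by simp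
  then show ?thesis
    using holder_quotient_le_iff[of "knot (i - 1)" v] False assms(2) by simp
qed simp

lemma pieces_adjacent_or_far:
  assumes "0 \<le> u" "u < v" "v \<le> 1" "\<forall>i\<in>{1..N}. \<not> (u \<in> piece i \<and> v \<in> piece i)"
  obtains (adjacent) i where "i \<in> {1..N-1}" "u \<in> piece i" "v \<in> piece (Suc i)"
  | (far) i j where "i \<in> {1..N}" "j \<in> {1..N}" "Suc i < j" "u \<in> piece i" "v \<in> piece j"
proof -
  obtain i where i: "i \<in> {1..N}" "u \<in> piece i"
    using pieces_cover[of u] assms(1-3) by auto
  obtain j where j: "j \<in> {1..N}" "v \<in> piece j"
    using pieces_cover[of v] assms(1-3) by auto
  have "i \<noteq> j"
    using assms(4) i j by blast
  moreover have "\<not> j < i"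
  proof
    assume "j < i"
    then have "knot j \<le> knot (i - 1)"
      by (intro knot_mono) simp
    then show False
      using i(2) j(2) assms(2) by simp
  qed
  ultimately have "i < j"
    by simp
  show ?thesis
  proof (cases "j = Suc i")
    case True
    then show ?thesis
      using adjacent[of i] i j by simp
  next
    case False
    then show ?thesis
      using far i j \<open>i < j\<close> by simp
  qed
qed

lemma far_pieces_gap:
  assumes "j \<in> {1..N}" "Suc i < j" "u \<in> piece i" "v \<in> piece j"
  shows "min_weight \<le> v - u"
proof -
  have "knot (Suc i) \<le> knot (j - 1)"
    using assms(2) by (intro knot_mono) simp
  moreover have "min_weight \<le> weight (Suc i)"
    using assms(1,2) by (intro min_weight_le) simp
  moreover have "u \<le> knot i" "knot (j - 1) \<le> v"
    using assms(3,4) by simp_all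
  ultimately show ?thesis
    using knot_Suc[of i] by linarith
qed

lemma holder_quotient_le:
  assumes "0 \<le> u" "u < v" "v \<le> 1"
  shows "holder_quotient u v \<le> 2 * upper_const"
  using assms
proof (induction rule: holder_quotient_induct)
  case (base u v)
  from base show ?case
  proof (cases rule: pieces_adjacent_or_far)
    case (adjacent i)
    have i: "i \<in> {1..N}" "Suc i \<in> {1..N}"
      using adjacent(1) by auto
    have "dist (\<phi> u) (\<phi> v) \<le> dist (\<phi> u) (\<phi> (knot i)) + dist (\<phi> (knot i)) (\<phi> v)"
      by (rule dist_triangle)
    also have "\<dots> \<le> upper_const * (knot i - u) powr (1 / s) + upper_const * (v - knot i) powr (1 / s)"
      using dist_phi_knot_le[OF i(1) adjacent(2)] dist_phi_knot_pred_le[OF i(2) adjacent(3)]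
      by simp
    also have "\<dots> \<le> upper_const * (v - u) powr (1 / s) + upper_const * (v - u) powr (1 / s)"
      using adjacent upper_const_nonneg s_pos by (intro add_mono mult_left_mono powr_mono2) auto
    finally show ?thesis
      using holder_quotient_le_iff[of u v] base(2) by (simp add: abs_if)
  next
    case (far i j)
    then have "holder_quotient u v \<le> upper_const"
      using base far_pieces_gap[of j i u v] by (intro holder_quotient_le_if_gap) auto
    then show ?thesis
      using upper_const_nonneg by linarith
  qed
qed

lemma dist_phi_le:
  assumes "u \<in> {0..1}" "v \<in> {0..1}"
  shows "dist (\<phi> u) (\<phi> v) \<le> 2 * upper_const * \<bar>u - v\<bar> powr (1 / s)"
proof -
  have le: "dist (\<phi> u) (\<phi> v) \<le> 2 * upper_const * \<bar>u - v\<bar> powr (1 / s)"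
    if "u < v" "u \<in> {0..1}" "v \<in> {0..1}" for u v
    using that holder_quotient_le[of u v] holder_quotient_le_iff[of u v] by simp
  consider "u < v" | "u = v" | "v < u"
    by linarith
  then show ?thesis
  proof cases
    case 3
    then show ?thesis
      using le[of v u] assms by (simp add: dist_commute abs_minus_commute)
  qed (use le assms in auto)
qed

section \<open>The parameterization maps onto the attractor\<close>

lemma continuous_on_phi: "continuous_on {0..1} \<phi>"
  using dist_phi_le s_pos by (intro holder_continuous_on[of "1 / s"]) (auto simp: dist_real_def)

lemma attractor_cover: "\<gamma> \<subseteq> (\<Union>i\<in>{1..N}. S i ` \<gamma>)"
  using attractor_eq by (rule equalityD1)

lemma attractor_subset_of_invariant:
  assumes "closed B" "B \<noteq> {}" "\<And>i. i \<in> {1..N} \<Longrightarrow> S i ` B \<subseteq> B"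
  shows "\<gamma> \<subseteq> B"
  using compact_attractor attractor_nonempty assms(1,2) attractor_cover assms(3)
proof (rule subset_of_contractions_invariant)
  show "dist (S i x) (S i y) \<le> r i * dist x y" if "i \<in> {1..N}" for i x y
    using dist_S[OF that] by simp
  show "r i \<in> {0..<1}" if "i \<in> {1..N}" for i
    using r_pos[OF that] r_less_1[OF that] by simp
qed

lemma phi_image: "\<phi> ` {0..1} = \<gamma>"
proof
  show "\<phi> ` {0..1} \<subseteq> \<gamma>"
    using phi_in_attractor by blast
  have "S i ` \<phi> ` {0..1} \<subseteq> \<phi> ` {0..1}" if i: "i \<in> {1..N}" for i
  proof -
    have "S i ` \<phi> ` {0..1} = \<phi> ` hs i ` {0..1}"
      unfolding image_image using phi_hs[OF i] by (intro image_cong) auto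
    also have "\<dots> \<subseteq> \<phi> ` {0..1}"
      using hs_in_unit[OF i] by (intro image_mono) blast
    finally show ?thesis .
  qed
  then show "\<gamma> \<subseteq> \<phi> ` {0..1}"
    using compact_continuous_image[OF continuous_on_phi]
    by (intro attractor_subset_of_invariant compact_imp_closed) auto
qed

lemma attractor_subset_if_endpoints_eq:
  assumes "a = b"
  shows "\<gamma> \<subseteq> {a}"
proof (rule attractor_subset_of_invariant)
  have "i \<le> N \<Longrightarrow> S i a = a" if "1 \<le> i" for i
    using that
  proof (induction i rule: dec_induct)
    case (step n)
    then have "S (Suc n) a = S n b"
      using S_b_eq_S_Suc_a[of n] by simp
    then show ?case
      using step assms by simp
  qed (rule S_1_a)
  then show "S i ` {a} \<subseteq> {a}" if "i \<in> {1..N}" for i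
    using that by simp
qed auto


lemma quasiarc_if_bi_holder:
  assumes "\<exists>K\<ge>1. \<forall>u\<in>{0..1}. \<forall>v\<in>{0..1}.
      inverse K * \<bar>u - v\<bar> powr (1 / s) \<le> dist (\<phi> u) (\<phi> v) \<and>
      dist (\<phi> u) (\<phi> v) \<le> K * \<bar>u - v\<bar> powr (1 / s)"
  shows "quasiarc \<gamma>"
proof -
  obtain K where "K \<ge> 1" and "\<forall>u\<in>{0..1}. \<forall>v\<in>{0..1}. inverse K * dist u v powr (1 / s) \<le> dist (\<phi> u) (\<phi> v) \<and>
      dist (\<phi> u) (\<phi> v) \<le> K * dist u v powr (1 / s)"
    using assms by (auto simp: dist_real_def)
  then have "quasisymmetric_on {0..1} \<phi>"
    using s_pos by (intro bi_holder_imp_quasisymmetric_on[of "1 / s" K]) auto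
  then show ?thesis
    unfolding quasiarc_def using phi_image by blast
qed
end

section \<open>The lower Hoelder bound on a quasiarc\<close>

locale hutchinson_arc = hutchinson_path +
  assumes arc: "ifs_arc N S \<gamma> a b"
begin

lemma adjacent_images_inter:
  assumes "i \<in> {1..N-1}"
  shows "S i ` \<gamma> \<inter> S (Suc i) ` \<gamma> = {\<phi> (knot i)}"
proof -
  have "Suc i \<in> {1..N}"
    using assms by auto
  then have "\<phi> (knot i) = S (Suc i) a"
    using phi_knot_pred[of "Suc i"] by simp
  then show ?thesis
    using arc assms unfolding ifs_arc_def by simp
qed

lemma far_images_disjoint:
  "i \<in> {1..N} \<Longrightarrow> j \<in> {1..N} \<Longrightarrow> Suc i < j \<Longrightarrow> S i ` \<gamma> \<inter> S j ` \<gamma> = {}"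
  using arc unfolding ifs_arc_def by auto

lemma far_pieces_separated:
  obtains \<delta> where "\<delta> > 0"
    and "\<And>i j u v. i \<in> {1..N} \<Longrightarrow> j \<in> {1..N} \<Longrightarrow> Suc i < j \<Longrightarrow> u \<in> piece i \<Longrightarrow> v \<in> piece j \<Longrightarrow>
           \<delta> \<le> dist (\<phi> u) (\<phi> v)"
proof -
  let ?P = "{(i, j). i \<in> {1..N} \<and> j \<in> {1..N} \<and> Suc i < j}"
  have "finite ?P"
    by (rule finite_subset[of _ "{1..N} \<times> {1..N}"]) auto
  moreover have "compact (S i ` \<gamma>)" if "i \<in> {1..N}" for i
    using compact_attractor continuous_on_S[OF that] by (rule compact_continuous_image[rotated])
  ultimately obtain \<delta> where "\<delta> > 0"
    and \<delta>: "\<forall>p\<in>?P. \<forall>x\<in>S (fst p) ` \<gamma>. \<forall>y\<in>S (snd p) ` \<gamma>. \<delta> \<le> dist x y"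
    using finite_compact_separation[of ?P "\<lambda>p. S (fst p) ` \<gamma>" "\<lambda>p. S (snd p) ` \<gamma>"]
      far_images_disjoint by auto
  show ?thesis
  proof (rule that[OF \<open>\<delta> > 0\<close>])
    fix i j u v
    assume "i \<in> {1..N}" "j \<in> {1..N}" "Suc i < j" "u \<in> piece i" "v \<in> piece j"
    then show "\<delta> \<le> dist (\<phi> u) (\<phi> v)"
      using \<delta> phi_in_piece_image[of i u] phi_in_piece_image[of j v] by fastforce
  qed
qed

end

locale hutchinson_turning = hutchinson_arc +
  fixes H :: real
  assumes turning_pos: "H > 0"
    and turning: "\<And>P Q w p q. P \<subseteq> \<gamma> \<Longrightarrow> Q \<subseteq> \<gamma> \<Longrightarrow> connected P \<Longrightarrow> connected Q \<Longrightarrow>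
      P \<inter> Q = {w} \<Longrightarrow> p \<in> P \<Longrightarrow> q \<in> Q \<Longrightarrow> dist w p \<le> H * dist q p"
    and endpoints_distinct: "a \<noteq> b"
begin

lemma adjacent_turning:
  assumes "i \<in> {1..N-1}" "u \<in> piece i" "v \<in> piece (Suc i)"
  shows "dist (\<phi> (knot i)) (\<phi> u) \<le> H * dist (\<phi> v) (\<phi> u)"
    and "dist (\<phi> (knot i)) (\<phi> v) \<le> H * dist (\<phi> u) (\<phi> v)"
proof -
  have i: "i \<in> {1..N}" "Suc i \<in> {1..N}"
    using assms(1) by auto
  let ?P = "\<phi> ` {u..knot i}" and ?Q = "\<phi> ` {knot i..v}"
  have "{u..knot i} \<subseteq> piece i" "{knot i..v} \<subseteq> piece (Suc i)"
    using assms(2,3) by auto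
  then have sub: "{u..knot i} \<subseteq> {0..1}" "{knot i..v} \<subseteq> {0..1}"
    using piece_subset[OF i(1)] piece_subset[OF i(2)] by blast+
  have PQ: "?P \<subseteq> S i ` \<gamma>" "?Q \<subseteq> S (Suc i) ` \<gamma>"
    using \<open>{u..knot i} \<subseteq> piece i\<close> \<open>{knot i..v} \<subseteq> piece (Suc i)\<close> phi_in_piece_image[OF i(1)]
      phi_in_piece_image[OF i(2)] by auto
  have "?P \<inter> ?Q \<subseteq> {\<phi> (knot i)}"
    using PQ adjacent_images_inter[OF assms(1)] by blast
  moreover have "\<phi> (knot i) \<in> ?P" "\<phi> (knot i) \<in> ?Q"
    using assms(2,3) by auto
  ultimately have inter: "?P \<inter> ?Q = {\<phi> (knot i)}" "?Q \<inter> ?P = {\<phi> (knot i)}"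
    by blast+
  have sub\<gamma>: "?P \<subseteq> \<gamma>" "?Q \<subseteq> \<gamma>"
    using sub phi_in_attractor by blast+
  have conn: "connected ?P" "connected ?Q"
    using sub by (auto intro!: connected_continuous_image continuous_on_subset[OF continuous_on_phi])
  have "\<phi> u \<in> ?P" "\<phi> v \<in> ?Q"
    using assms(2,3) by auto
  then show "dist (\<phi> (knot i)) (\<phi> u) \<le> H * dist (\<phi> v) (\<phi> u)"
    and "dist (\<phi> (knot i)) (\<phi> v) \<le> H * dist (\<phi> u) (\<phi> v)"
    using turning[OF sub\<gamma> conn inter(1)] turning[OF sub\<gamma>(2,1) conn(2,1) inter(2)] by blast+
qed

lemma dist_right_end_ge:
  obtains c where "c > 0" and "\<And>x. 0 \<le> x \<Longrightarrow> x < knot (N - 1) \<Longrightarrow> c \<le> dist (\<phi> x) (\<phi> 1)"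
proof -
  obtain \<delta> where "\<delta> > 0" and \<delta>: "\<And>i j u v. i \<in> {1..N} \<Longrightarrow> j \<in> {1..N} \<Longrightarrow> Suc i < j \<Longrightarrow>
      u \<in> piece i \<Longrightarrow> v \<in> piece j \<Longrightarrow> \<delta> \<le> dist (\<phi> u) (\<phi> v)"
    using far_pieces_separated by blast
  have "1 \<in> piece N"
    using knot_N knot_le_1[of "N - 1"] by auto
  show ?thesis
  proof (rule that[of "min \<delta> (r N * dist a b / H)"])
    show "min \<delta> (r N * dist a b / H) > 0"
      using \<open>\<delta> > 0\<close> r_pos[OF N_in_range] turning_pos endpoints_distinct by simp
    fix x
    assume x: "0 \<le> x" "x < knot (N - 1)"
    then obtain j where j: "j \<in> {1..N}" "x \<in> piece j"
      using pieces_cover[of x] knot_le_1[of "N - 1"] by auto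
    then have "j < N"
      using x by (cases "j = N") auto
    show "min \<delta> (r N * dist a b / H) \<le> dist (\<phi> x) (\<phi> 1)"
    proof (cases "Suc j < N")
      case True
      then show ?thesis
        using \<delta>[OF j(1) N_in_range True j(2) \<open>1 \<in> piece N\<close>] by linarith
    next
      case False
      then have "j = N - 1" "N - 1 \<in> {1..N-1}"
        using \<open>j < N\<close> j(1) N_ge_2 by auto
      then have "dist (\<phi> (knot (N - 1))) (\<phi> 1) \<le> H * dist (\<phi> x) (\<phi> 1)"
        using adjacent_turning(2)[of "N - 1" x 1] j(2) \<open>1 \<in> piece N\<close> N_ge_2 by simp
      moreover have "dist (\<phi> (knot (N - 1))) (\<phi> 1) = r N * dist a b"
        using phi_knot_pred[OF N_in_range] phi_1 S_N_b dist_S[OF N_in_range] by metis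
      ultimately have "r N * dist a b / H \<le> dist (\<phi> x) (\<phi> 1)"
        using turning_pos by (simp add: divide_le_eq mult.commute)
      then show ?thesis
        by linarith
    qed
  qed
qed

lemma dist_left_end_ge:
  obtains c where "c > 0" and "\<And>x. knot 1 < x \<Longrightarrow> x \<le> 1 \<Longrightarrow> c \<le> dist (\<phi> x) (\<phi> 0)"
proof -
  obtain \<delta> where "\<delta> > 0" and \<delta>: "\<And>i j u v. i \<in> {1..N} \<Longrightarrow> j \<in> {1..N} \<Longrightarrow> Suc i < j \<Longrightarrow>
      u \<in> piece i \<Longrightarrow> v \<in> piece j \<Longrightarrow> \<delta> \<le> dist (\<phi> u) (\<phi> v)"
    using far_pieces_separated by blast
  have "0 \<in> piece 1"
    using knot_0 knot_nonneg[of 1] by auto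
  show ?thesis
  proof (rule that[of "min \<delta> (r 1 * dist a b / H)"])
    show "min \<delta> (r 1 * dist a b / H) > 0"
      using \<open>\<delta> > 0\<close> r_pos[OF one_in_range] turning_pos endpoints_distinct by simp
    fix x
    assume x: "knot 1 < x" "x \<le> 1"
    then obtain j where j: "j \<in> {1..N}" "x \<in> piece j"
      using pieces_cover[of x] knot_nonneg[of 1] by auto
    then have "1 < j"
      using x by (cases "j = 1") auto
    show "min \<delta> (r 1 * dist a b / H) \<le> dist (\<phi> x) (\<phi> 0)"
    proof (cases "Suc 1 < j")
      case True
      then show ?thesis
        using \<delta>[OF one_in_range j(1) True \<open>0 \<in> piece 1\<close> j(2)] by (simp add: dist_commute)
    next
      case False
      then have "j = Suc 1" "1 \<in> {1..N-1}"
        using \<open>1 < j\<close> N_ge_2 by auto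
      then have "dist (\<phi> (knot 1)) (\<phi> 0) \<le> H * dist (\<phi> x) (\<phi> 0)"
        using adjacent_turning(1)[of 1 0 x] j(2) \<open>0 \<in> piece 1\<close> by simp
      moreover have "dist (\<phi> (knot 1)) (\<phi> 0) = r 1 * dist a b"
        using phi_knot[OF one_in_range] phi_0 S_1_a dist_S[OF one_in_range] by (metis dist_commute)
      ultimately have "r 1 * dist a b / H \<le> dist (\<phi> x) (\<phi> 0)"
        using turning_pos by (simp add: divide_le_eq mult.commute)
      then show ?thesis
        by linarith
    qed
  qed
qed

lemma holder_quotient_ends_ge:
  obtains c where "c > 0"
    and "\<And>x. 0 \<le> x \<Longrightarrow> x < 1 \<Longrightarrow> c \<le> holder_quotient x 1"
    and "\<And>x. 0 < x \<Longrightarrow> x \<le> 1 \<Longrightarrow> c \<le> holder_quotient 0 x"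
proof -
  obtain c1 where "c1 > 0" and right: "\<And>x. 0 \<le> x \<Longrightarrow> x < knot (N - 1) \<Longrightarrow> c1 \<le> dist (\<phi> x) (\<phi> 1)"
    using dist_right_end_ge by blast
  obtain c2 where "c2 > 0" and left: "\<And>x. knot 1 < x \<Longrightarrow> x \<le> 1 \<Longrightarrow> c2 \<le> dist (\<phi> x) (\<phi> 0)"
    using dist_left_end_ge by blast
  show ?thesis
  proof (rule that[of "min c1 c2"])
    show "min c1 c2 > 0"
      using \<open>c1 > 0\<close> \<open>c2 > 0\<close> by simp
    show "min c1 c2 \<le> holder_quotient x 1" if "0 \<le> x" "x < 1" for x
      using that
    proof (induction rule: holder_quotient_right_end_induct)
      case (base x)
      then show ?case
        using right[OF base] dist_phi_le_holder_quotient[of x 1] knot_le_1[of "N - 1"] by simp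
    qed
    show "min c1 c2 \<le> holder_quotient 0 x" if "0 < x" "x \<le> 1" for x
      using that
    proof (induction rule: holder_quotient_left_end_induct)
      case (base x)
      then show ?case
        using left[OF base] dist_phi_le_holder_quotient[of 0 x] knot_nonneg[of 1]
        by (simp add: dist_commute)
    qed
  qed
qed

lemma dist_phi_knots_ge:
  obtains c where "c > 0"
    and "\<And>i u. i \<in> {1..N} \<Longrightarrow> u \<in> piece i \<Longrightarrow>
           c * (knot i - u) powr (1 / s) \<le> dist (\<phi> u) (\<phi> (knot i))"
    and "\<And>i v. i \<in> {1..N} \<Longrightarrow> v \<in> piece i \<Longrightarrow>
           c * (v - knot (i - 1)) powr (1 / s) \<le> dist (\<phi> (knot (i - 1))) (\<phi> v)"
proof -
  obtain c where "c > 0"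
    and right: "\<And>x. 0 \<le> x \<Longrightarrow> x < 1 \<Longrightarrow> c \<le> holder_quotient x 1"
    and left: "\<And>x. 0 < x \<Longrightarrow> x \<le> 1 \<Longrightarrow> c \<le> holder_quotient 0 x"
    using holder_quotient_ends_ge by blast
  show ?thesis
  proof (rule that[OF \<open>c > 0\<close>])
    fix i u
    assume iu: "i \<in> {1..N}" "u \<in> piece i"
    show "c * (knot i - u) powr (1 / s) \<le> dist (\<phi> u) (\<phi> (knot i))"
    proof (cases "u = knot i")
      case False
      then obtain x where "0 \<le> x" "x < 1" "holder_quotient u (knot i) = holder_quotient x 1"
        using holder_quotient_to_knot iu by blast
      then have "c \<le> holder_quotient u (knot i)"
        using right by simp
      then show ?thesis
        using le_holder_quotient_iff[OF False] iu(2) by simp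
    qed simp
  next
    fix i v
    assume iv: "i \<in> {1..N}" "v \<in> piece i"
    show "c * (v - knot (i - 1)) powr (1 / s) \<le> dist (\<phi> (knot (i - 1))) (\<phi> v)"
    proof (cases "v = knot (i - 1)")
      case False
      then obtain x where "0 < x" "x \<le> 1" "holder_quotient (knot (i - 1)) v = holder_quotient 0 x"
        using holder_quotient_from_knot_pred iv by blast
      then have "c \<le> holder_quotient (knot (i - 1)) v"
        using left by simp
      then show ?thesis
        using le_holder_quotient_iff[of "knot (i - 1)" v] False iv(2) by simp
    qed simp
  qed
qed

lemma adjacent_pieces_dist_ge:
  obtains c where "c > 0"
    and "\<And>i u v. i \<in> {1..N-1} \<Longrightarrow> u \<in> piece i \<Longrightarrow> v \<in> piece (Suc i) \<Longrightarrow>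
           c * (v - u) powr (1 / s) \<le> dist (\<phi> u) (\<phi> v)"
proof -
  obtain c0 where "c0 > 0"
    and to_knot: "\<And>i u. i \<in> {1..N} \<Longrightarrow> u \<in> piece i \<Longrightarrow>
           c0 * (knot i - u) powr (1 / s) \<le> dist (\<phi> u) (\<phi> (knot i))"
    and from_knot: "\<And>i v. i \<in> {1..N} \<Longrightarrow> v \<in> piece i \<Longrightarrow>
           c0 * (v - knot (i - 1)) powr (1 / s) \<le> dist (\<phi> (knot (i - 1))) (\<phi> v)"
    using dist_phi_knots_ge by blast
  show ?thesis
  proof (rule that[of "c0 / H * (1 / 2) powr (1 / s)"])
    show "c0 / H * (1 / 2) powr (1 / s) > 0"
      using \<open>c0 > 0\<close> turning_pos by simp
    fix i u v
    assume adjacent: "i \<in> {1..N-1}" "u \<in> piece i" "v \<in> piece (Suc i)"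
    have i: "i \<in> {1..N}" "Suc i \<in> {1..N}"
      using adjacent(1) by auto
    let ?D = "dist (\<phi> u) (\<phi> v)"
    have "c0 * (knot i - u) powr (1 / s) \<le> H * ?D"
      using to_knot[OF i(1) adjacent(2)] adjacent_turning(1)[OF adjacent]
      by (simp add: dist_commute)
    moreover have "c0 * (v - knot i) powr (1 / s) \<le> H * ?D"
      using from_knot[OF i(2) adjacent(3)] adjacent_turning(2)[OF adjacent] by simp
    moreover have "c0 * ((v - u) / 2) powr (1 / s) \<le> c0 * (knot i - u) powr (1 / s) \<or>
        c0 * ((v - u) / 2) powr (1 / s) \<le> c0 * (v - knot i) powr (1 / s)"
      using adjacent(2,3) \<open>c0 > 0\<close> s_pos by (auto intro!: mult_left_mono powr_mono2)
    ultimately have "c0 * ((v - u) / 2) powr (1 / s) \<le> H * ?D"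
      by linarith
    then show "c0 / H * (1 / 2) powr (1 / s) * (v - u) powr (1 / s) \<le> ?D"
      using adjacent(2,3) turning_pos by (simp add: powr_divide field_simps)
  qed
qed

lemma holder_quotient_ge:
  obtains c where "c > 0" and "\<And>u v. 0 \<le> u \<Longrightarrow> u < v \<Longrightarrow> v \<le> 1 \<Longrightarrow> c \<le> holder_quotient u v"
proof -
  obtain c0 where "c0 > 0" and adjacent_ge: "\<And>i u v. i \<in> {1..N-1} \<Longrightarrow> u \<in> piece i \<Longrightarrow>
      v \<in> piece (Suc i) \<Longrightarrow> c0 * (v - u) powr (1 / s) \<le> dist (\<phi> u) (\<phi> v)"
    using adjacent_pieces_dist_ge by blast
  obtain \<delta> where "\<delta> > 0" and \<delta>: "\<And>i j u v. i \<in> {1..N} \<Longrightarrow> j \<in> {1..N} \<Longrightarrow> Suc i < j \<Longrightarrow>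
      u \<in> piece i \<Longrightarrow> v \<in> piece j \<Longrightarrow> \<delta> \<le> dist (\<phi> u) (\<phi> v)"
    using far_pieces_separated by blast
  show ?thesis
  proof (rule that[of "min \<delta> c0"])
    show "min \<delta> c0 > 0"
      using \<open>\<delta> > 0\<close> \<open>c0 > 0\<close> by simp
    fix u v :: real
    assume "0 \<le> u" "u < v" "v \<le> 1"
    then show "min \<delta> c0 \<le> holder_quotient u v"
    proof (induction rule: holder_quotient_induct)
      case (base u v)
      from base show ?case
      proof (cases rule: pieces_adjacent_or_far)
        case (adjacent i)
        then have "c0 \<le> holder_quotient u v"
          using adjacent_ge[OF adjacent] le_holder_quotient_iff[of u v] base(2) by simp
        then show ?thesis
          by linarith
      next
        case (far i j)
        then have "\<delta> \<le> holder_quotient u v"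
          using \<delta>[OF far] dist_phi_le_holder_quotient[of u v] base(1-3) by simp
        then show ?thesis
          by linarith
      qed
    qed
  qed
qed

lemma dist_phi_ge:
  obtains c where "c > 0"
    and "\<And>u v. u \<in> {0..1} \<Longrightarrow> v \<in> {0..1} \<Longrightarrow> c * \<bar>u - v\<bar> powr (1 / s) \<le> dist (\<phi> u) (\<phi> v)"
proof -
  obtain c where "c > 0" and c: "\<And>u v. 0 \<le> u \<Longrightarrow> u < v \<Longrightarrow> v \<le> 1 \<Longrightarrow> c \<le> holder_quotient u v"
    using holder_quotient_ge by blast
  have le: "c * \<bar>u - v\<bar> powr (1 / s) \<le> dist (\<phi> u) (\<phi> v)"
    if "u < v" "u \<in> {0..1}" "v \<in> {0..1}" for u v
    using c[of u v] le_holder_quotient_iff[of u v] that by simp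
  show ?thesis
  proof (rule that[OF \<open>c > 0\<close>])
    fix u v :: real
    assume uv: "u \<in> {0..1}" "v \<in> {0..1}"
    consider "u < v" | "u = v" | "v < u"
      by linarith
    then show "c * \<bar>u - v\<bar> powr (1 / s) \<le> dist (\<phi> u) (\<phi> v)"
    proof cases
      case 3
      then show ?thesis
        using le[of v u] uv by (simp add: dist_commute abs_minus_commute)
    qed (use le uv in auto)
  qed
qed

end

context hutchinson_arc
begin

lemma bi_holder_if_quasiarc:
  assumes "quasiarc \<gamma>"
  shows "\<exists>K\<ge>1. \<forall>u\<in>{0..1}. \<forall>v\<in>{0..1}.
      inverse K * \<bar>u - v\<bar> powr (1 / s) \<le> dist (\<phi> u) (\<phi> v) \<and>
      dist (\<phi> u) (\<phi> v) \<le> K * \<bar>u - v\<bar> powr (1 / s)"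
proof -
  obtain H where "H > 0" and "\<And>P Q w p q. P \<subseteq> \<gamma> \<Longrightarrow> Q \<subseteq> \<gamma> \<Longrightarrow> connected P \<Longrightarrow>
      connected Q \<Longrightarrow> P \<inter> Q = {w} \<Longrightarrow> p \<in> P \<Longrightarrow> q \<in> Q \<Longrightarrow> dist w p \<le> H * dist q p"
    using quasiarc_three_point[OF assms] by blast
  moreover have "a \<noteq> b"
    using attractor_subset_if_endpoints_eq quasiarc_not_singleton[OF assms] by blast
  ultimately interpret hutchinson_turning S r N \<gamma> a b s \<phi> H
    using hutchinson_arc_axioms by (simp add: hutchinson_turning_def hutchinson_turning_axioms_def)
  obtain c where "c > 0" and "\<And>u v. u \<in> {0..1} \<Longrightarrow> v \<in> {0..1} \<Longrightarrow>
      c * \<bar>u - v\<bar> powr (1 / s) \<le> dist (\<phi> u) (\<phi> v)"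
    using dist_phi_ge by blast
  then show ?thesis
    using dist_phi_le by (intro bi_holder_constant) auto
qed

end

theorem theorem1p5:
  fixes S :: "nat \<Rightarrow> 'a::euclidean_space \<Rightarrow> 'a" and r :: "nat \<Rightarrow> real"
    and N :: nat and \<gamma> :: "'a set" and a b :: 'a and s :: real and \<phi> :: "real \<Rightarrow> 'a"
  assumes "contracting_ifs N S r"
    and "invariant_set N S \<gamma>"
    and "ifs_arc N S \<gamma> a b"
    and "similarity_dimension N r s"
    and "hutchinson_parameterization N S r s a b \<phi>"
  shows "quasiarc \<gamma> \<longleftrightarrow>
    (\<exists>K\<ge>1. \<forall>u\<in>{0..1}. \<forall>v\<in>{0..1}.
        inverse K * \<bar>u - v\<bar> powr (1 / s) \<le> dist (\<phi> u) (\<phi> v) \<and>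
        dist (\<phi> u) (\<phi> v) \<le> K * \<bar>u - v\<bar> powr (1 / s))"
proof -
  interpret hutchinson_arc S r N \<gamma> a b s \<phi>
    using assms by unfold_locales (simp_all add: ifs_arc_def)
  show ?thesis
    using bi_holder_if_quasiarc quasiarc_if_bi_holder by blast
qed

end
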